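(* Let $\sigma$ be as in the context with the exponent $\alpha$ of condition $(\Sigma3)$ satisfying $\alpha>1$. Then $$\widehat{\phi_\sigma}(0)=1,\qquad \widehat{\phi_\sigma}(2\pi k)=0\ \text{ for all } k\in\mathbb Z\setminus\{0\},\qquad [\widehat{\phi_\sigma}]'(0)=0.$$
   Context: $\sigma:\mathbb R\to\mathbb R$ is a non-decreasing sigmoidal function ($\lim_{x\to-\infty}\sigma(x)=0$, $\lim_{x\to+\infty}\sigma(x)=1$) satisfying: $(\Sigma1)$ $\sigma(x)-1/2$ is odd; $(\Sigma2)$ $\sigma\in C^2(\mathbb R)$ and concave on $[0,+\infty)$; $(\Sigma3)$ $\sigma(x)=\mathcal O(|x|^{-1-\alpha})$ as $x\to-\infty$ for some $\alpha>0$. $\phi_\sigma(x):=\frac12[\sigma(x+1)-\sigma(x-1)]$, $x\in\mathbb R$. The Fourier transform of $g\in L^1(\mathbb R)$ is $\widehat g(v):=\int_{\mathbb R}g(x)e^{-ixv}\,dx$. *)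

theory Defs
  imports "HOL-Analysis.Analysis" "HOL-Library.Landau_Symbols"
begin

definition sigmoidal :: "(real \<Rightarrow> real) \<Rightarrow> bool" where
  "sigmoidal \<sigma> \<longleftrightarrow> mono \<sigma> \<and> (\<sigma> \<longlongrightarrow> 0) at_bot \<and> (\<sigma> \<longlongrightarrow> 1) at_top"

definition C2_real :: "(real \<Rightarrow> real) \<Rightarrow> bool" where
  "C2_real f \<longleftrightarrow> (\<forall>x. f differentiable at x) \<and> (\<forall>x. deriv f differentiable at x)
      \<and> continuous_on UNIV (deriv (deriv f))"

definition phi_sigma :: "(real \<Rightarrow> real) \<Rightarrow> real \<Rightarrow> real" where
  "phi_sigma \<sigma> x = (\<sigma> (x + 1) - \<sigma> (x - 1)) / 2"

definition fourier :: "(real \<Rightarrow> real) \<Rightarrow> real \<Rightarrow> complex" where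
  "fourier g v = (LINT x|lborel. complex_of_real (g x) * exp (- \<i> * complex_of_real (x * v)))"

end

theory Submission
  imports Defs
begin

(* Since e x = exp (-i 2 pi k x) has period 1, phi_sigma x * e x equals
   (h (x + 1) - h (x - 1)) / 2 for h = sigma * e, so its integral over [-t, t]
   telescopes to half the difference of the integrals of h over [t - 1, t + 1] and
   [-t - 1, -t + 1].  As sigma tends to 1 at +infinity and to 0 at -infinity, the first
   tends to the integral of e over an interval of length 2, which is 2 for k = 0 and
   0 otherwise, and the second to 0.
   Since phi_sigma is even, its Fourier transform is its cosine transform.  By (Sigma3)
   with alpha > 1, |x|^gamma phi_sigma is integrable for some 1 < gamma < alpha, and
   |cos t - 1| <= 2 |t|^gamma then gives |hat phi (v) - hat phi (0)| = O(|v|^gamma). *)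

lemma sigmoidal_bounds:
  fixes \<sigma> :: "real \<Rightarrow> real"
  assumes "sigmoidal \<sigma>"
  shows "0 \<le> \<sigma> x" "\<sigma> x \<le> 1"
proof -
  have mono: "mono \<sigma>" and lim_bot: "(\<sigma> \<longlongrightarrow> 0) at_bot" and lim_top: "(\<sigma> \<longlongrightarrow> 1) at_top"
    using assms by (auto simp: sigmoidal_def)
  have "eventually (\<lambda>y. \<sigma> y \<le> \<sigma> x) at_bot"
    using mono by (auto simp: eventually_at_bot_linorder mono_def)
  then show "0 \<le> \<sigma> x"
    using tendsto_upperbound[OF lim_bot] by auto
  have "eventually (\<lambda>y. \<sigma> x \<le> \<sigma> y) at_top"
    using mono by (auto simp: eventually_at_top_linorder mono_def)
  then show "\<sigma> x \<le> 1"
    using tendsto_lowerbound[OF lim_top] by auto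
qed

lemma sigmoidal_borel_measurable: "sigmoidal \<sigma> \<Longrightarrow> \<sigma> \<in> borel_measurable borel"
  by (simp add: sigmoidal_def borel_measurable_mono)

lemma phi_sigma_borel_measurable: "sigmoidal \<sigma> \<Longrightarrow> phi_sigma \<sigma> \<in> borel_measurable borel"
  using sigmoidal_borel_measurable[of \<sigma>] unfolding phi_sigma_def by measurable

lemma phi_sigma_nonneg: "sigmoidal \<sigma> \<Longrightarrow> 0 \<le> phi_sigma \<sigma> x"
  by (simp add: sigmoidal_def phi_sigma_def monoD)

lemma phi_sigma_le_shift: "sigmoidal \<sigma> \<Longrightarrow> phi_sigma \<sigma> x \<le> \<sigma> (x + 1)"
  using sigmoidal_bounds[of \<sigma> "x - 1"] sigmoidal_bounds[of \<sigma> "x + 1"]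
  by (simp add: phi_sigma_def)

lemma phi_sigma_le_half: "sigmoidal \<sigma> \<Longrightarrow> phi_sigma \<sigma> x \<le> 1/2"
  using sigmoidal_bounds[of \<sigma> "x - 1"] sigmoidal_bounds[of \<sigma> "x + 1"]
  by (simp add: phi_sigma_def)

lemma phi_sigma_even:
  assumes "\<And>x. \<sigma> (- x) = 1 - \<sigma> x"
  shows "phi_sigma \<sigma> (- x) = phi_sigma \<sigma> x"
  using assms[of "x - 1"] assms[of "x + 1"] by (simp add: phi_sigma_def)

lemma phi_sigma_decay:
  fixes \<sigma> :: "real \<Rightarrow> real"
  assumes sig: "sigmoidal \<sigma>" and sym: "\<And>x. \<sigma> (- x) = 1 - \<sigma> x"
    and decay: "\<sigma> \<in> O[at_bot](\<lambda>x. \<bar>x\<bar> powr p)"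
  obtains R D where "R > 0" "\<And>x. R \<le> \<bar>x\<bar> \<Longrightarrow> phi_sigma \<sigma> x \<le> D * \<bar>x\<bar> powr p"
proof -
  obtain c where "eventually (\<lambda>x. norm (\<sigma> x) \<le> c * norm (\<bar>x\<bar> powr p)) at_bot"
    using landau_o.bigE[OF decay] by blast
  then obtain M where M: "\<And>x. x \<le> M \<Longrightarrow> \<bar>\<sigma> x\<bar> \<le> c * \<bar>x\<bar> powr p"
    unfolding eventually_at_bot_linorder by auto
  define R where "R = 2 * (1 + \<bar>M\<bar>)"
  define D where "D = c / 2 powr p"
  have neg: "phi_sigma \<sigma> x \<le> D * \<bar>x\<bar> powr p" if x: "x \<le> - R" for x
  proof -
    have "x + 1 \<le> x / 2"
      using x by (simp add: R_def)
    then have "\<sigma> (x + 1) \<le> \<sigma> (x / 2)"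
      using sig by (simp add: sigmoidal_def monoD)
    then have "phi_sigma \<sigma> x \<le> \<sigma> (x / 2)"
      using phi_sigma_le_shift[OF sig, of x] by linarith
    also have "\<dots> \<le> c * \<bar>x / 2\<bar> powr p"
      using M[of "x / 2"] x by (simp add: R_def abs_le_iff)
    also have "\<dots> = D * \<bar>x\<bar> powr p"
      by (simp add: D_def powr_divide)
    finally show ?thesis .
  qed
  have "phi_sigma \<sigma> x \<le> D * \<bar>x\<bar> powr p" if "R \<le> \<bar>x\<bar>" for x
    using neg[of x] neg[of "- x"] phi_sigma_even[where \<sigma>=\<sigma>, OF sym, of x] that by (cases "x \<le> 0") auto
  moreover have "R > 0" by (simp add: R_def)
  ultimately show ?thesis using that by blast
qed

lemma integrable_abs_powr_tail:
  fixes p R :: real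
  assumes "p < -1" "R > 0"
  shows "integrable lborel (\<lambda>x. indicator {R..} \<bar>x\<bar> * \<bar>x\<bar> powr p)"
proof -
  have "(\<lambda>x. x powr p) absolutely_integrable_on {R..}"
    using has_integral_powr_to_inf[OF assms]
    by (intro nonnegative_absolutely_integrable_1) auto
  then have right: "integrable lborel (\<lambda>x. indicator {R..} x *\<^sub>R x powr p)"
    by (simp add: absolutely_integrable_on_def set_integrable_def integrable_completion)
  then have left: "integrable lborel (\<lambda>x. indicator {R..} (- x) *\<^sub>R (- x) powr p)"
    using lborel_integrable_real_affine[OF right, of "-1" 0] by simp
  have "indicator {R..} \<bar>x\<bar> * \<bar>x\<bar> powr p
      = indicator {R..} x *\<^sub>R x powr p + indicator {R..} (- x) *\<^sub>R (- x) powr p" for x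
    using assms by (auto simp: indicator_def abs_if)
  then show ?thesis
    using Bochner_Integration.integrable_add[OF right left] by simp
qed

lemma integrable_powr_decay:
  fixes f :: "real \<Rightarrow> 'a::{banach, second_countable_topology}"
  assumes [measurable]: "f \<in> borel_measurable borel"
    and "p < -1" "R > 0"
    and near: "\<And>x. \<bar>x\<bar> \<le> R \<Longrightarrow> norm (f x) \<le> M"
    and far: "\<And>x. R \<le> \<bar>x\<bar> \<Longrightarrow> norm (f x) \<le> D * \<bar>x\<bar> powr p"
  shows "integrable lborel f"
proof (rule Bochner_Integration.integrable_bound)
  show "integrable lborel (\<lambda>x. indicator {-R<..<R} x * M + D * (indicator {R..} \<bar>x\<bar> * \<bar>x\<bar> powr p))"
    using integrable_abs_powr_tail[OF assms(2,3)] \<open>R > 0\<close>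
    by (intro Bochner_Integration.integrable_add integrable_mult_left integrable_real_indicator) auto
  show "AE x in lborel. norm (f x)
      \<le> norm (indicator {-R<..<R} x * M + D * (indicator {R..} \<bar>x\<bar> * \<bar>x\<bar> powr p))"
  proof (rule AE_I2)
    fix x
    show "norm (f x) \<le> norm (indicator {-R<..<R} x * M + D * (indicator {R..} \<bar>x\<bar> * \<bar>x\<bar> powr p))"
    proof (cases "\<bar>x\<bar> < R")
      case True
      then show ?thesis
        using near[of x] by (auto simp: indicator_def)
    next
      case False
      then show ?thesis
        using far[of x] by (auto simp: indicator_def abs_less_iff)
    qed
  qed
qed simp

lemma phi_sigma_moment_integrable:
  fixes \<sigma> :: "real \<Rightarrow> real"
  assumes sig: "sigmoidal \<sigma>" and sym: "\<And>x. \<sigma> (- x) = 1 - \<sigma> x"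
    and decay: "\<sigma> \<in> O[at_bot](\<lambda>x. \<bar>x\<bar> powr (- 1 - \<alpha>))"
    and "0 \<le> \<gamma>" "\<gamma> < \<alpha>"
  shows "integrable lborel (\<lambda>x. \<bar>x\<bar> powr \<gamma> * phi_sigma \<sigma> x)"
proof -
  obtain R D where R: "R > 0" and D: "\<And>x. R \<le> \<bar>x\<bar> \<Longrightarrow> phi_sigma \<sigma> x \<le> D * \<bar>x\<bar> powr (- 1 - \<alpha>)"
    using phi_sigma_decay[OF sig sym decay] by blast
  show ?thesis
  proof (rule integrable_powr_decay)
    show "(\<lambda>x. \<bar>x\<bar> powr \<gamma> * phi_sigma \<sigma> x) \<in> borel_measurable borel"
      using phi_sigma_borel_measurable[OF sig] by measurable
    show "norm (\<bar>x\<bar> powr \<gamma> * phi_sigma \<sigma> x) \<le> R powr \<gamma> * 1" if "\<bar>x\<bar> \<le> R" for x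
    proof -
      have "\<bar>x\<bar> powr \<gamma> \<le> R powr \<gamma>"
        using that \<open>0 \<le> \<gamma>\<close> by (simp add: powr_mono2)
      have "\<bar>phi_sigma \<sigma> x\<bar> \<le> 1"
        using phi_sigma_nonneg[OF sig, of x] phi_sigma_le_half[OF sig, of x] by simp
      then show ?thesis
        unfolding norm_mult using \<open>\<bar>x\<bar> powr \<gamma> \<le> R powr \<gamma>\<close> by (intro mult_mono) auto
    qed
    show "norm (\<bar>x\<bar> powr \<gamma> * phi_sigma \<sigma> x) \<le> D * \<bar>x\<bar> powr (\<gamma> - 1 - \<alpha>)" if "R \<le> \<bar>x\<bar>" for x
    proof -
      have "norm (\<bar>x\<bar> powr \<gamma> * phi_sigma \<sigma> x) \<le> \<bar>x\<bar> powr \<gamma> * (D * \<bar>x\<bar> powr (- 1 - \<alpha>))"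
        using that D[OF that] phi_sigma_nonneg[OF sig, of x] by (simp add: abs_mult mult_left_mono)
      also have "\<dots> = D * \<bar>x\<bar> powr (\<gamma> + (- 1 - \<alpha>))"
        by (simp add: powr_add mult.left_commute)
      also have "\<gamma> + (- 1 - \<alpha>) = \<gamma> - 1 - \<alpha>"
        by simp
      finally show ?thesis .
    qed
  qed (use assms R in auto)
qed

lemma phi_sigma_integrable:
  fixes \<sigma> :: "real \<Rightarrow> real"
  assumes "sigmoidal \<sigma>" "\<And>x. \<sigma> (- x) = 1 - \<sigma> x"
    and "\<sigma> \<in> O[at_bot](\<lambda>x. \<bar>x\<bar> powr (- 1 - \<alpha>))" "\<alpha> > 0"
  shows "integrable lborel (phi_sigma \<sigma>)"
proof -
  \<comment> \<open>\<open>0 powr 0 = 0\<close>, so the moment of order 0 agrees with \<open>phi_sigma \<sigma>\<close> only almost everywhere.\<close>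
  have "integrable lborel (\<lambda>x. \<bar>x\<bar> powr 0 * phi_sigma \<sigma> x)"
    using phi_sigma_moment_integrable[OF assms(1-3), of 0] assms(4) by simp
  moreover have "phi_sigma \<sigma> \<in> borel_measurable lborel"
    using phi_sigma_borel_measurable[OF assms(1)] by simp
  moreover have "AE x in lborel. \<bar>x\<bar> powr 0 * phi_sigma \<sigma> x = phi_sigma \<sigma> x"
    using AE_lborel_singleton[of 0] by eventually_elim simp
  ultimately show ?thesis
    by (rule integrable_cong_AE_imp)
qed

lemma set_integrable_bounded_Ioc:
  fixes f :: "real \<Rightarrow> 'a::{banach, second_countable_topology}"
  assumes "f \<in> borel_measurable borel" "\<And>x. norm (f x) \<le> B"
  shows "set_integrable lborel {a<..b} f"
  unfolding set_integrable_def
proof (rule integrableI_bounded_set_indicator[where B=B])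
  show "emeasure lborel {a<..b} < \<infinity>"
    by (cases "a \<le> b") auto
qed (use assms in auto)

lemma set_integral_split_Ioc:
  fixes f :: "real \<Rightarrow> 'a::{banach, second_countable_topology}"
  assumes "a \<le> b" "b \<le> c" "set_integrable lborel {a<..b} f" "set_integrable lborel {b<..c} f"
  shows "(LINT x:{a<..c}|lborel. f x) = (LINT x:{a<..b}|lborel. f x) + (LINT x:{b<..c}|lborel. f x)"
proof -
  have "{a<..c} = {a<..b} \<union> {b<..c}"
    using assms(1,2) by auto
  then show ?thesis
    using assms(3,4) by (simp add: set_integral_Un)
qed

lemma indicator_Ioc_shift:
  fixes a b c x :: real
  shows "indicator {a+c<..b+c} (c + x) = (indicator {a<..b} x :: real)"
  by (auto simp: indicator_def)

lemma set_integral_shift: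
  fixes h :: "real \<Rightarrow> 'a::{banach, second_countable_topology}"
  shows "(LINT x:{a<..b}|lborel. h (x + c)) = (LINT y:{a+c<..b+c}|lborel. h y)"
  using lborel_integral_real_affine[of 1 "\<lambda>y. indicator {a+c<..b+c} y *\<^sub>R h y" c]
  by (simp add: set_lebesgue_integral_def indicator_Ioc_shift) (simp add: add.commute)

lemma set_integrable_shift:
  fixes h :: "real \<Rightarrow> 'a::{banach, second_countable_topology}"
  assumes "set_integrable lborel {a+c<..b+c} h"
  shows "set_integrable lborel {a<..b} (\<lambda>x. h (x + c))"
  using lborel_integrable_real_affine[of "\<lambda>y. indicator {a+c<..b+c} y *\<^sub>R h y" 1 c] assms
  by (simp add: set_integrable_def indicator_Ioc_shift) (simp add: add.commute)

lemma set_integral_shift_difference: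
  fixes h :: "real \<Rightarrow> 'a::{banach, second_countable_topology}"
  assumes h: "\<And>a b. set_integrable lborel {a<..b} h" and "1 \<le> t"
  shows "(LINT x:{-t<..t}|lborel. h (x + 1) - h (x - 1))
       = (LINT x:{t-1<..t+1}|lborel. h x) - (LINT x:{-t-1<..-t+1}|lborel. h x)"
proof -
  have "(LINT x:{-t<..t}|lborel. h (x + 1) - h (x - 1))
      = (LINT x:{-t<..t}|lborel. h (x + 1)) - (LINT x:{-t<..t}|lborel. h (x + -1))"
    using set_integrable_shift[where a="-t" and b=t and c=1, OF h]
      set_integrable_shift[where a="-t" and b=t and c="-1", OF h]
    by simp
  also have "\<dots> = (LINT x:{-t+1<..t+1}|lborel. h x) - (LINT x:{-t-1<..t-1}|lborel. h x)"
    using set_integral_shift[where h=h and a="-t" and b=t and c=1]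
      set_integral_shift[where h=h and a="-t" and b=t and c="-1"] by simp
  also have "(LINT x:{-t+1<..t+1}|lborel. h x)
      = (LINT x:{-t+1<..t-1}|lborel. h x) + (LINT x:{t-1<..t+1}|lborel. h x)"
    using \<open>1 \<le> t\<close> by (intro set_integral_split_Ioc h) auto
  also have "(LINT x:{-t-1<..t-1}|lborel. h x)
      = (LINT x:{-t-1<..-t+1}|lborel. h x) + (LINT x:{-t+1<..t-1}|lborel. h x)"
    using \<open>1 \<le> t\<close> by (intro set_integral_split_Ioc h) auto
  finally show ?thesis
    by (simp add: algebra_simps)
qed

lemma window_integral_tendsto_0:
  fixes f :: "real \<Rightarrow> 'a::{banach, second_countable_topology}"
  assumes f: "\<And>t. set_integrable lborel {t-1<..t+1} f"
    and bound: "\<And>t x. x \<in> {t-1<..t+1} \<Longrightarrow> norm (f x) \<le> b t"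
    and b: "(b \<longlongrightarrow> 0) F"
  shows "((\<lambda>t. LINT x:{t-1<..t+1}|lborel. f x) \<longlongrightarrow> 0) F"
proof (rule Lim_null_comparison)
  show "\<forall>\<^sub>F t in F. norm (LINT x:{t-1<..t+1}|lborel. f x) \<le> 2 * b t"
  proof (intro always_eventually allI)
    fix t
    have "norm (LINT x:{t-1<..t+1}|lborel. f x) \<le> (LINT x:{t-1<..t+1}|lborel. norm (f x))"
      using f by (rule set_integral_norm_bound)
    also have "\<dots> \<le> (LINT x:{t-1<..t+1}|lborel. b t)"
      using bound by (intro set_integral_mono set_integrable_norm f set_integrable_bounded_Ioc) auto
    also have "\<dots> = 2 * b t"
      by (simp add: set_integral_const)
    finally show "norm (LINT x:{t-1<..t+1}|lborel. f x) \<le> 2 * b t" .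
  qed
  show "((\<lambda>t. 2 * b t) \<longlongrightarrow> 0) F"
    using tendsto_mult_right_zero[OF b] by simp
qed

lemma exp_2pi_int_periodic:
  fixes k m :: int
  shows "exp (- \<i> * complex_of_real ((x + of_int m) * (2 * pi * of_int k)))
       = exp (- \<i> * complex_of_real (x * (2 * pi * of_int k)))"
proof -
  have period: "exp ((2 * of_int (m * k) * of_real pi) * \<i>) = 1"
    using exp_integer_2pi[of "of_int (m * k)"] by simp
  have "exp (- \<i> * complex_of_real ((x + of_int m) * (2 * pi * of_int k)))
      = exp (- \<i> * complex_of_real (x * (2 * pi * of_int k)) - (2 * of_int (m * k) * of_real pi) * \<i>)"
    by (rule arg_cong[where f=exp]) (simp add: algebra_simps)
  also have "\<dots> = exp (- \<i> * complex_of_real (x * (2 * pi * of_int k)))"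
    by (simp only: exp_diff period div_by_1)
  finally show ?thesis .
qed

lemma set_integral_exp_2pi_int_window:
  fixes k :: int
  shows "(LINT x:{t-1<..t+1}|lborel. exp (- \<i> * complex_of_real (x * (2 * pi * of_int k))))
       = (if k = 0 then 2 else 0)"
proof (cases "k = 0")
  case True
  then show ?thesis
    by (simp add: set_integral_const scaleR_conv_of_real)
next
  case False
  define v where "v = 2 * pi * of_int k"
  define F where "F x = exp (- \<i> * complex_of_real (x * v)) / (- \<i> * complex_of_real v)" for x
  have "v \<noteq> 0"
    using False by (simp add: v_def)
  have "(LINT x:{t-1<..t+1}|lborel. exp (- \<i> * complex_of_real (x * v)))
      = (LBINT x=t-1..t+1. exp (- \<i> * complex_of_real (x * v)))"
    by (simp add: interval_integral_Ioc)
  also have "\<dots> = F (t+1) - F (t-1)"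
  proof (rule interval_integral_FTC_finite)
    show "continuous_on {min (t-1) (t+1)..max (t-1) (t+1)} (\<lambda>x. exp (- \<i> * complex_of_real (x * v)))"
      by (intro continuous_intros)
    fix x
    have "((\<lambda>z. exp (- \<i> * (z * complex_of_real v)) / (- \<i> * complex_of_real v)) has_field_derivative
            exp (- \<i> * (complex_of_real x * complex_of_real v))) (at (complex_of_real x))"
      using \<open>v \<noteq> 0\<close> by (auto intro!: derivative_eq_intros simp: field_simps)
    from has_vector_derivative_real_field[OF this]
    show "(F has_vector_derivative exp (- \<i> * complex_of_real (x * v)))
        (at x within {min (t-1) (t+1)..max (t-1) (t+1)})"
      unfolding F_def by simp
  qed
  also have "F (t+1) = F (t-1)"
    using exp_2pi_int_periodic[of "t-1" 2 k] by (simp add: F_def v_def add.commute)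
  finally show ?thesis
    using False by (simp add: v_def)
qed

lemma fourier_truncation_tendsto:
  assumes "integrable lborel g"
  shows "((\<lambda>t. LINT x:{-t<..t}|lborel. complex_of_real (g x) * exp (- \<i> * complex_of_real (x * v)))
           \<longlongrightarrow> fourier g v) at_top"
proof -
  let ?f = "\<lambda>x. complex_of_real (g x) * exp (- \<i> * complex_of_real (x * v))"
  have [measurable]: "g \<in> borel_measurable lborel"
    using assms by (rule borel_measurable_integrable)
  have "((\<lambda>t. \<integral>x. indicator {-t<..t} x *\<^sub>R ?f x \<partial>lborel) \<longlongrightarrow> integral\<^sup>L lborel ?f) at_top"
  proof (rule integral_dominated_convergence_at_top[where w="\<lambda>x. \<bar>g x\<bar>"])
    show "?f \<in> borel_measurable lborel"
      by measurable
    show "(\<lambda>x. indicator {-t<..t} x *\<^sub>R ?f x) \<in> borel_measurable lborel" for t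
      by measurable
    show "integrable lborel (\<lambda>x. \<bar>g x\<bar>)"
      using assms by (rule integrable_abs)
    show "AE x in lborel. ((\<lambda>t. indicator {-t<..t} x *\<^sub>R ?f x) \<longlongrightarrow> ?f x) at_top"
    proof (intro AE_I2 tendsto_eventually)
      fix x :: real
      show "\<forall>\<^sub>F t in at_top. indicator {-t<..t} x *\<^sub>R ?f x = ?f x"
        unfolding eventually_at_top_linorder by (auto intro!: exI[of _ "\<bar>x\<bar> + 1"] simp: indicator_def)
    qed
    show "\<forall>\<^sub>F t in at_top. AE x in lborel. norm (indicator {-t<..t} x *\<^sub>R ?f x) \<le> \<bar>g x\<bar>"
      by (auto simp: indicator_def norm_mult)
  qed
  then show ?thesis
    unfolding set_lebesgue_integral_def fourier_def .
qed

lemma abs_cos_minus_one_le_powr: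
  fixes t \<gamma> :: real
  assumes "0 \<le> \<gamma>" "\<gamma> \<le> 2"
  shows "\<bar>cos t - 1\<bar> \<le> 2 * \<bar>t\<bar> powr \<gamma>"
proof (cases "1 \<le> \<bar>t\<bar>")
  case True
  have "\<bar>cos t - 1\<bar> \<le> 2"
    using abs_cos_le_one[of t] by linarith
  also have "\<dots> \<le> 2 * \<bar>t\<bar> powr \<gamma>"
    using ge_one_powr_ge_zero[OF True \<open>0 \<le> \<gamma>\<close>] by simp
  finally show ?thesis .
next
  case False
  have "cos t = 1 - 2 * sin (t / 2) ^ 2"
    using cos_double_sin[of "t / 2"] by simp
  then have "\<bar>cos t - 1\<bar> = 2 * sin (t / 2) ^ 2"
    by simp
  also have "\<dots> \<le> 2 * (t / 2) ^ 2"
    using abs_sin_x_le_abs_x[of "t / 2"] power_mono[of "\<bar>sin (t / 2)\<bar>" "\<bar>t / 2\<bar>" 2]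
    by (simp add: power_divide)
  also have "\<dots> \<le> 2 * \<bar>t\<bar> powr 2"
    by (simp add: power2_eq_square)
  also have "\<dots> \<le> 2 * \<bar>t\<bar> powr \<gamma>"
    using False assms by (intro mult_left_mono powr_mono') auto
  finally show ?thesis .
qed

lemma integral_odd_eq_0:
  fixes f :: "real \<Rightarrow> real"
  assumes "\<And>x. f (- x) = - f x"
  shows "integral\<^sup>L lborel f = 0"
proof -
  have "integral\<^sup>L lborel f = (\<integral>x. f (- x) \<partial>lborel)"
    using lborel_integral_real_affine[of "-1" f 0] by simp
  also have "\<dots> = - integral\<^sup>L lborel f"
    by (simp add: assms)
  finally show ?thesis
    by linarith
qed

lemma integrable_mult_bounded:
  fixes g c :: "real \<Rightarrow> real"
  assumes "integrable lborel g" "c \<in> borel_measurable borel" "\<And>x. \<bar>c x\<bar> \<le> 1"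
  shows "integrable lborel (\<lambda>x. g x * c x)"
proof (rule Bochner_Integration.integrable_bound[OF integrable_abs[OF assms(1)]])
  show "(\<lambda>x. g x * c x) \<in> borel_measurable lborel"
    using borel_measurable_integrable[OF assms(1)] assms(2) by measurable
  show "AE x in lborel. norm (g x * c x) \<le> norm \<bar>g x\<bar>"
    using assms(3) by (intro AE_I2) (simp add: abs_mult mult_left_le)
qed

lemma exp_minus_i_times_real:
  "exp (- \<i> * complex_of_real t) = complex_of_real (cos t) - \<i> * complex_of_real (sin t)"
proof -
  have "exp (- \<i> * complex_of_real t) = cis (- t)"
    by (simp add: cis_conv_exp)
  then show ?thesis
    by (simp add: complex_eq_iff)
qed

lemma fourier_even:
  assumes even: "\<And>x. g (- x) = g x" and int: "integrable lborel g"
  shows "fourier g v = complex_of_real (LINT x|lborel. g x * cos (x * v))"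
proof -
  have int_cos: "integrable lborel (\<lambda>x. g x * cos (x * v))"
    and int_sin: "integrable lborel (\<lambda>x. g x * sin (x * v))"
    using int by (auto intro!: integrable_mult_bounded)
  have "fourier g v
      = (LINT x|lborel. complex_of_real (g x * cos (x * v)) - \<i> * complex_of_real (g x * sin (x * v)))"
    unfolding fourier_def exp_minus_i_times_real by (simp add: algebra_simps)
  also have "\<dots> = (LINT x|lborel. complex_of_real (g x * cos (x * v)))
      - \<i> * (LINT x|lborel. complex_of_real (g x * sin (x * v)))"
  proof -
    have "integrable lborel (\<lambda>x. \<i> * complex_of_real (g x * sin (x * v)))"
      by (intro integrable_mult_right integrable_of_real int_sin)
    then show ?thesis
      by (subst Bochner_Integration.integral_diff[OF integrable_of_real[OF int_cos]]) simp_all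
  qed
  also have "\<dots> = complex_of_real (LINT x|lborel. g x * cos (x * v))
      - \<i> * complex_of_real (LINT x|lborel. g x * sin (x * v))"
    by (simp only: integral_complex_of_real)
  also have "(LINT x|lborel. g x * sin (x * v)) = 0"
    by (rule integral_odd_eq_0) (simp add: even)
  finally show ?thesis
    by simp
qed

lemma has_vector_derivative_0_of_powr_bound:
  fixes f :: "real \<Rightarrow> 'a::real_normed_vector"
  assumes bound: "\<And>y. norm (f y - f 0) \<le> K * \<bar>y\<bar> powr \<gamma>" and "1 < \<gamma>"
  shows "(f has_vector_derivative 0) (at 0)"
proof -
  have "((\<lambda>y::real. \<bar>y\<bar> powr (\<gamma> - 1)) \<longlongrightarrow> 0) (at 0)"
  proof (rule tendsto_zero_powrI)
    show "((\<lambda>y::real. \<bar>y\<bar>) \<longlongrightarrow> 0) (at 0)"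
      using tendsto_rabs[OF tendsto_ident_at[of "0::real" UNIV]] by simp
  qed (use \<open>1 < \<gamma>\<close> in auto)
  then have lim: "((\<lambda>y. K * \<bar>y\<bar> powr (\<gamma> - 1)) \<longlongrightarrow> 0) (at 0)"
    by (rule tendsto_mult_right_zero)
  have "((\<lambda>y. norm (f y - f 0 - y *\<^sub>R 0) / norm (y - 0)) \<longlongrightarrow> 0) (at 0)"
  proof (rule Lim_null_comparison[OF always_eventually lim], intro allI)
    fix y :: real
    show "norm (norm (f y - f 0 - y *\<^sub>R 0) / norm (y - 0)) \<le> K * \<bar>y\<bar> powr (\<gamma> - 1)"
    proof (cases "y = 0")
      case False
      have "norm (norm (f y - f 0 - y *\<^sub>R 0) / norm (y - 0)) = norm (f y - f 0) / \<bar>y\<bar>"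
        by simp
      also have "\<dots> \<le> K * \<bar>y\<bar> powr \<gamma> / \<bar>y\<bar>"
        using bound[of y] by (rule divide_right_mono) simp
      also have "\<dots> = K * \<bar>y\<bar> powr (\<gamma> - 1)"
        using False by (simp add: powr_diff)
      finally show ?thesis .
    qed simp
  qed
  then have "(f has_derivative (\<lambda>h. h *\<^sub>R 0)) (at 0)"
    by (subst has_derivative_iff_norm) auto
  then show ?thesis
    unfolding has_vector_derivative_def .
qed

lemma fourier_even_has_vector_derivative_0:
  fixes g :: "real \<Rightarrow> real"
  assumes even: "\<And>x. g (- x) = g x" and int: "integrable lborel g"
    and moment: "integrable lborel (\<lambda>x. \<bar>x\<bar> powr \<gamma> * g x)" and "1 < \<gamma>" "\<gamma> \<le> 2"
  shows "(fourier g has_vector_derivative 0) (at 0)"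
proof (rule has_vector_derivative_0_of_powr_bound)
  define K where "K = (LINT x|lborel. \<bar>x\<bar> powr \<gamma> * \<bar>g x\<bar>)"
  have int_cos: "integrable lborel (\<lambda>x. g x * cos (x * y))" for y
    using int by (auto intro!: integrable_mult_bounded)
  have int_moment: "integrable lborel (\<lambda>x. 2 * \<bar>y\<bar> powr \<gamma> * (\<bar>x\<bar> powr \<gamma> * \<bar>g x\<bar>))" for y
    using integrable_abs[OF moment] by (simp add: abs_mult)
  fix y
  have "norm (fourier g y - fourier g 0) = \<bar>LINT x|lborel. g x * (cos (x * y) - 1)\<bar>"
    using int_cos[of y] int by (simp add: fourier_even[OF even int] right_diff_distrib flip: of_real_diff)
  also have "\<dots> \<le> (LINT x|lborel. \<bar>g x * (cos (x * y) - 1)\<bar>)"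
    using integral_norm_bound[of lborel "\<lambda>x. g x * (cos (x * y) - 1)"] by simp
  also have "\<dots> \<le> (LINT x|lborel. 2 * \<bar>y\<bar> powr \<gamma> * (\<bar>x\<bar> powr \<gamma> * \<bar>g x\<bar>))"
  proof (rule integral_mono)
    show "integrable lborel (\<lambda>x. \<bar>g x * (cos (x * y) - 1)\<bar>)"
      using int_cos[of y] int by (intro integrable_abs) (simp add: right_diff_distrib)
    show "\<bar>g x * (cos (x * y) - 1)\<bar> \<le> 2 * \<bar>y\<bar> powr \<gamma> * (\<bar>x\<bar> powr \<gamma> * \<bar>g x\<bar>)" for x
      using abs_cos_minus_one_le_powr[of \<gamma> "x * y"] \<open>1 < \<gamma>\<close> \<open>\<gamma> \<le> 2\<close>
      by (simp add: abs_mult powr_mult mult_left_mono mult_ac)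
  qed (rule int_moment)
  also have "\<dots> = 2 * K * \<bar>y\<bar> powr \<gamma>"
    by (simp add: K_def)
  finally show "norm (fourier g y - fourier g 0) \<le> 2 * K * \<bar>y\<bar> powr \<gamma>" .
qed (rule \<open>1 < \<gamma>\<close>)

lemma set_integrable_sigmoidal_mult:
  fixes \<sigma> :: "real \<Rightarrow> real" and e :: "real \<Rightarrow> complex"
  assumes "sigmoidal \<sigma>" "e \<in> borel_measurable borel" "\<And>x. norm (e x) \<le> 1"
  shows "set_integrable lborel {a<..b} (\<lambda>x. complex_of_real (\<sigma> x) * e x)"
proof (rule set_integrable_bounded_Ioc[where B=1])
  show "(\<lambda>x. complex_of_real (\<sigma> x) * e x) \<in> borel_measurable borel"
    using sigmoidal_borel_measurable[OF assms(1)] assms(2) by measurable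
  show "norm (complex_of_real (\<sigma> x) * e x) \<le> 1" for x
    using sigmoidal_bounds[OF assms(1), of x] assms(3)[of x] by (simp add: norm_mult mult_le_one)
qed

lemma set_integral_phi_sigma_periodic:
  fixes \<sigma> :: "real \<Rightarrow> real" and e :: "real \<Rightarrow> complex"
  assumes "sigmoidal \<sigma>" "e \<in> borel_measurable borel" "\<And>x. norm (e x) \<le> 1"
    and period: "\<And>x. e (x + 1) = e x" and "1 \<le> t"
  shows "(LINT x:{-t<..t}|lborel. complex_of_real (phi_sigma \<sigma> x) * e x)
       = ((LINT x:{t-1<..t+1}|lborel. complex_of_real (\<sigma> x) * e x)
          - (LINT x:{-t-1<..-t+1}|lborel. complex_of_real (\<sigma> x) * e x)) / 2"
proof -
  define h where "h x = complex_of_real (\<sigma> x) * e x" for x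
  have shifts: "complex_of_real (phi_sigma \<sigma> x) * e x = (h (x + 1) - h (x - 1)) / 2" for x
    using period[of x] period[of "x - 1"] by (simp add: h_def phi_sigma_def field_simps)
  show ?thesis
    unfolding shifts set_integral_divide_zero h_def
    using set_integral_shift_difference[OF set_integrable_sigmoidal_mult[OF assms(1-3)] \<open>1 \<le> t\<close>]
    by simp
qed

lemma window_integral_sigmoidal_tendsto_at_top:
  fixes \<sigma> :: "real \<Rightarrow> real" and e :: "real \<Rightarrow> complex"
  assumes sig: "sigmoidal \<sigma>" and e: "e \<in> borel_measurable borel" "\<And>x. norm (e x) \<le> 1"
  shows "((\<lambda>t. LINT x:{t-1<..t+1}|lborel. complex_of_real (\<sigma> x) * e x - e x) \<longlongrightarrow> 0) at_top"
proof (rule window_integral_tendsto_0)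
  have mono: "mono \<sigma>" and lim_top: "(\<sigma> \<longlongrightarrow> 1) at_top"
    using sig by (auto simp: sigmoidal_def)
  show "set_integrable lborel {t-1<..t+1} (\<lambda>x. complex_of_real (\<sigma> x) * e x - e x)" for t
    using set_integrable_sigmoidal_mult[OF sig e] set_integrable_bounded_Ioc[OF e] by simp
  show "norm (complex_of_real (\<sigma> x) * e x - e x) \<le> 1 - \<sigma> (t - 1)" if "x \<in> {t-1<..t+1}" for t x
  proof -
    have "complex_of_real (\<sigma> x) * e x - e x = complex_of_real (\<sigma> x - 1) * e x"
      by (simp add: algebra_simps)
    then have "norm (complex_of_real (\<sigma> x) * e x - e x) = (1 - \<sigma> x) * norm (e x)"
      using sigmoidal_bounds[OF sig, of x] by (simp add: norm_mult del: of_real_diff)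
    also have "\<dots> \<le> 1 - \<sigma> x"
      using sigmoidal_bounds[OF sig, of x] e(2)[of x] by (simp add: mult_left_le)
    also have "\<dots> \<le> 1 - \<sigma> (t - 1)"
      using that mono by (simp add: monoD)
    finally show ?thesis .
  qed
  have "LIM t at_top. t - 1 :> (at_top :: real filter)"
    using filterlim_tendsto_add_at_top[OF tendsto_const[of "-1"] filterlim_ident] by simp
  then have "((\<lambda>t. \<sigma> (t - 1)) \<longlongrightarrow> 1) at_top"
    by (rule filterlim_compose[OF lim_top])
  then show "((\<lambda>t. 1 - \<sigma> (t - 1)) \<longlongrightarrow> 0) at_top"
    using tendsto_diff[OF tendsto_const[of 1]] by fastforce
qed

lemma window_integral_sigmoidal_tendsto_at_bot:
  fixes \<sigma> :: "real \<Rightarrow> real" and e :: "real \<Rightarrow> complex"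
  assumes sig: "sigmoidal \<sigma>" and e: "e \<in> borel_measurable borel" "\<And>x. norm (e x) \<le> 1"
  shows "((\<lambda>t. LINT x:{t-1<..t+1}|lborel. complex_of_real (\<sigma> x) * e x) \<longlongrightarrow> 0) at_bot"
proof (rule window_integral_tendsto_0)
  have mono: "mono \<sigma>" and lim_bot: "(\<sigma> \<longlongrightarrow> 0) at_bot"
    using sig by (auto simp: sigmoidal_def)
  show "set_integrable lborel {t-1<..t+1} (\<lambda>x. complex_of_real (\<sigma> x) * e x)" for t
    by (rule set_integrable_sigmoidal_mult[OF sig e])
  show "norm (complex_of_real (\<sigma> x) * e x) \<le> \<sigma> (t + 1)" if "x \<in> {t-1<..t+1}" for t x
  proof -
    have "norm (complex_of_real (\<sigma> x) * e x) \<le> \<sigma> x"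
      using sigmoidal_bounds[OF sig, of x] e(2)[of x] by (simp add: norm_mult mult_left_le)
    also have "\<dots> \<le> \<sigma> (t + 1)"
      using that mono by (simp add: monoD)
    finally show ?thesis .
  qed
  have "LIM t at_bot. t + 1 :> (at_bot :: real filter)"
    using filterlim_tendsto_add_at_bot_iff[OF tendsto_const[of 1], of "\<lambda>t. t"]
    by (simp add: add.commute filterlim_ident)
  then show "((\<lambda>t. \<sigma> (t + 1)) \<longlongrightarrow> 0) at_bot"
    by (rule filterlim_compose[OF lim_bot])
qed

lemma fourier_phi_sigma_2pi_int:
  fixes \<sigma> :: "real \<Rightarrow> real" and k :: int
  assumes sig: "sigmoidal \<sigma>" and int: "integrable lborel (phi_sigma \<sigma>)"
  shows "fourier (phi_sigma \<sigma>) (2 * pi * of_int k) = (if k = 0 then 1 else 0)"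
proof -
  define e where "e x = exp (- \<i> * complex_of_real (x * (2 * pi * of_int k)))" for x
  define W where "W t = (LINT x:{t-1<..t+1}|lborel. complex_of_real (\<sigma> x) * e x)" for t
  define L :: complex where "L = (if k = 0 then 2 else 0)"
  have e_measurable: "e \<in> borel_measurable borel"
    unfolding e_def by measurable
  have norm_e: "norm (e x) \<le> 1" for x
    by (simp add: e_def)
  note e = e_measurable norm_e
  have "(LINT x:{t-1<..t+1}|lborel. e x) = L" for t
    unfolding e_def L_def by (rule set_integral_exp_2pi_int_window)
  then have "W t - L = (LINT x:{t-1<..t+1}|lborel. complex_of_real (\<sigma> x) * e x - e x)" for t
    using set_integrable_sigmoidal_mult[OF sig e] set_integrable_bounded_Ioc[OF e] by (simp add: W_def)
  then have "((\<lambda>t. W t - L) \<longlongrightarrow> 0) at_top"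
    using window_integral_sigmoidal_tendsto_at_top[OF sig e] by simp
  then have W_top: "(W \<longlongrightarrow> L) at_top"
    by (simp add: LIM_zero_iff)
  have W_bot: "((\<lambda>t. W (- t)) \<longlongrightarrow> 0) at_top"
    using window_integral_sigmoidal_tendsto_at_bot[OF sig e] by (simp add: W_def filterlim_at_bot_mirror)
  have "((\<lambda>t. LINT x:{-t<..t}|lborel. complex_of_real (phi_sigma \<sigma> x) * e x) \<longlongrightarrow> (L - 0) / 2) at_top"
  proof (rule Lim_transform_eventually)
    show "((\<lambda>t. (W t - W (- t)) / 2) \<longlongrightarrow> (L - 0) / 2) at_top"
      by (intro tendsto_intros W_top W_bot) simp
    have period: "e (x + 1) = e x" for x
      using exp_2pi_int_periodic[of x 1 k] by (simp add: e_def)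
    show "\<forall>\<^sub>F t in at_top. (W t - W (- t)) / 2 = (LINT x:{-t<..t}|lborel. complex_of_real (phi_sigma \<sigma> x) * e x)"
      using eventually_ge_at_top[of 1]
      by eventually_elim (simp add: W_def set_integral_phi_sigma_periodic[OF sig e period])
  qed
  moreover have "((\<lambda>t. LINT x:{-t<..t}|lborel. complex_of_real (phi_sigma \<sigma> x) * e x)
      \<longlongrightarrow> fourier (phi_sigma \<sigma>) (2 * pi * of_int k)) at_top"
    unfolding e_def by (rule fourier_truncation_tendsto[OF int])
  ultimately have "(L - 0) / 2 = fourier (phi_sigma \<sigma>) (2 * pi * of_int k)"
    using tendsto_unique[OF trivial_limit_at_top_linorder] by blast
  then show ?thesis
    by (cases "k = 0") (auto simp: L_def)
qed

theorem lemma4p1: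
  fixes \<sigma> :: "real \<Rightarrow> real" and \<alpha> :: real
  assumes sig: "sigmoidal \<sigma>"
    and S1: "\<forall>x. \<sigma> (- x) - 1/2 = - (\<sigma> x - 1/2)"
    and S2: "C2_real \<sigma>" and S2c: "concave_on {0..} \<sigma>"
    and S3: "\<sigma> \<in> O[at_bot](\<lambda>x. \<bar>x\<bar> powr (- 1 - \<alpha>))"
    and alpha: "\<alpha> > 1"
  shows "fourier (phi_sigma \<sigma>) 0 = 1
    \<and> (\<forall>k::int. k \<noteq> 0 \<longrightarrow> fourier (phi_sigma \<sigma>) (2 * pi * of_int k) = 0)
    \<and> (fourier (phi_sigma \<sigma>) has_vector_derivative 0) (at 0)"
proof -
  have sym: "\<sigma> (- x) = 1 - \<sigma> x" for x
    using S1[rule_format, of x] by linarith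
  define \<gamma> where "\<gamma> = (1 + min \<alpha> 2) / 2"
  have \<gamma>: "1 < \<gamma>" "\<gamma> \<le> 2" "\<gamma> < \<alpha>"
    using alpha by (auto simp: \<gamma>_def)
  have int: "integrable lborel (phi_sigma \<sigma>)"
    using phi_sigma_integrable[OF sig sym S3] alpha by simp
  have moment: "integrable lborel (\<lambda>x. \<bar>x\<bar> powr \<gamma> * phi_sigma \<sigma> x)"
    using phi_sigma_moment_integrable[OF sig sym S3] \<gamma> by simp
  have "fourier (phi_sigma \<sigma>) 0 = 1"
    using fourier_phi_sigma_2pi_int[OF sig int, of 0] by simp
  moreover have "\<forall>k::int. k \<noteq> 0 \<longrightarrow> fourier (phi_sigma \<sigma>) (2 * pi * of_int k) = 0"
    using fourier_phi_sigma_2pi_int[OF sig int] by simp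
  moreover have "(fourier (phi_sigma \<sigma>) has_vector_derivative 0) (at 0)"
    using phi_sigma_even[where \<sigma>=\<sigma>, OF sym] int moment \<gamma>(1,2) by (rule fourier_even_has_vector_derivative_0)
  ultimately show ?thesis
    by blast
qed

end
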